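(* Let $\varphi$ be an LTL formula over $2^{V_i}$ and let $\mathcal{A}_\varphi$ be an ACA with $\mathcal{L}(\mathcal{A}_\varphi)=\mathcal{L}(\varphi)$. If there exists a strategy for process $p_i$ that is winning for $\varphi$ (i.e. $\varphi$ is realizable by $p_i$), then every strategy for $p_i$ that is delay-dominant for $\mathcal{A}_\varphi$ is winning for $\varphi$.
   Context: Automata. For a finite set $\Sigma$ of atomic propositions, an alternating co-Büchi automaton (ACA) over $2^\Sigma$ is a tuple $\mathcal{A}=(Q,q_0,\delta,F)$ with a finite set of states $Q$, initial state $q_0\in Q$, set of rejecting states $F\subseteq Q$, and transition function $\delta:Q\times 2^\Sigma\to\mathbb{B}^+(Q)$ into positive Boolean formulas over $Q$ given in disjunctive normal form; $\delta(q,a)$ is identified with the set of its disjuncts, each disjunct $c\in\delta(q,a)$ being a set of states. A run tree of $\mathcal{A}$ on $\sigma=\sigma_0\sigma_1\cdots\in(2^\Sigma)^\omega$ is a $Q$-labeled tree $(T,\ell)$ ($T\subseteq\mathbb{N}^*$ prefix-closed) with $\ell(\varepsilon)=q_0$ and $\{\ell(x')\mid x'\text{ a child of }x\}\in\delta(\ell(x),\sigma_{|x|})$ for every node $x$; it is accepting if every infinite branch visits $F$ only finitely often. $\mathcal{A}$ accepts $\sigma$ if some run tree on $\sigma$ is accepting; $\mathcal{L}(\mathcal{A})$ is the set of accepted words. For an LTL formula $\varphi$, $\mathcal{L}(\varphi)$ is the set of infinite words satisfying $\varphi$. (As implicit in the game below, each $\delta(q,a)$ and each of its disjuncts is nonempty.)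 Processes and strategies. A process $p_i$ has disjoint finite sets $I_i$ of input and $O_i$ of output variables; $V_i=I_i\cup O_i$. A strategy for $p_i$ is a function $s:(2^{I_i})^*\to 2^{O_i}$ representable by a finite Moore machine. For $\gamma\in(2^{I_i})^\omega$ the computation $\mathrm{comp}(s,\gamma)\in(2^{V_i})^\omega$ is given by $\mathrm{comp}(s,\gamma)_j=\gamma_j\cup s(\gamma_0\cdots\gamma_{j-1})$ for all $j\ge 0$. A strategy $s$ for $p_i$ is winning for $\varphi$ if $\mathrm{comp}(s,\gamma)\models\varphi$ for all $\gamma\in(2^{I_i})^\omega$. Delay-dominance game. Let $\mathcal{A}=(Q,q_0,\delta,F)$ be an ACA and $\sigma,\sigma'$ infinite words over its alphabet. The game $(\mathcal{A},\sigma,\sigma')$ is played between Duplicator (Player 0) and Spoiler (Player 1) on positions of the forms $((p,q),j)$ and $((p,q,c,c'),j)$ (owned by Spoiler) and $((p,q,c),j)$ and $((p,q,c,q'),j)$ (owned by Duplicator), with $p,q,q'\in Q$, $c,c'\subseteq Q$, $j\in\mathbb{N}$. Moves: from $((p,q),j)$ to $((p,q,c),j)$ with $c\in\delta(p,\sigma_j)$; from $((p,q,c),j)$ to $((p,q,c,c'),j)$ with $c'\in\delta(q,\sigma'_j)$; from $((p,q,c,c'),j)$ to $((p,q,c,q'),j)$ with $q'\in c'$; from $((p,q,c,q'),j)$ to $((p',q'),j+1)$ with $p'\in c$. The initial position is $((q_0,q_0),0)$. For a position whose state tuple is $(p,q)$, $(p,q,c)$, $(p,q,c,c')$ or $(p,q,c,q')$,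 its alternative state is $p$ and its dominant state is $q$. A play $\rho_0\rho_1\cdots$ is won by Duplicator iff for every $k$ such that the dominant state of $\rho_k$ lies in $F$ there is $k'\ge k$ such that the alternative state of $\rho_{k'}$ lies in $F$. A strategy of a player maps finite play prefixes ending in one of its positions to a legal successor; a Duplicator strategy is winning if every play from the initial position consistent with it is won by Duplicator. Delay-dominance. For strategies $s,t$ of $p_i$, an ACA $\mathcal{A}$ over $2^{V_i}$ and $\gamma\in(2^{I_i})^\omega$: $s$ delay-dominates $t$ on $\gamma$ if Duplicator has a winning strategy in $(\mathcal{A},\mathrm{comp}(t,\gamma),\mathrm{comp}(s,\gamma))$; $s$ delay-dominates $t$ if this holds for all $\gamma$; $s$ is delay-dominant for $\mathcal{A}$ (and $p_i$) if it delay-dominates every strategy $t$ for $p_i$. *)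

theory Defs
  imports Main
begin

datatype 'a ltl =
    LTrue
  | LProp 'a
  | LNot "'a ltl"
  | LAnd "'a ltl" "'a ltl"
  | LNext "'a ltl"
  | LUntil "'a ltl" "'a ltl"

type_synonym 'a word = "nat \<Rightarrow> 'a set"

primrec ltl_sat :: "'a word \<Rightarrow> 'a ltl \<Rightarrow> bool" where
  "ltl_sat w LTrue = True"
| "ltl_sat w (LProp a) = (a \<in> w 0)"
| "ltl_sat w (LNot f) = (\<not> ltl_sat w f)"
| "ltl_sat w (LAnd f g) = (ltl_sat w f \<and> ltl_sat w g)"
| "ltl_sat w (LNext f) = ltl_sat (\<lambda>k. w (Suc k)) f"
| "ltl_sat w (LUntil f g) =
     (\<exists>i. ltl_sat (\<lambda>k. w (i + k)) g \<and> (\<forall>j<i. ltl_sat (\<lambda>k. w (j + k)) f))"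

primrec ltl_atoms :: "'a ltl \<Rightarrow> 'a set" where
  "ltl_atoms LTrue = {}"
| "ltl_atoms (LProp a) = {a}"
| "ltl_atoms (LNot f) = ltl_atoms f"
| "ltl_atoms (LAnd f g) = ltl_atoms f \<union> ltl_atoms g"
| "ltl_atoms (LNext f) = ltl_atoms f"
| "ltl_atoms (LUntil f g) = ltl_atoms f \<union> ltl_atoms g"

definition words_over :: "'a set \<Rightarrow> 'a word set" where
  "words_over AP = {w. \<forall>j. w j \<subseteq> AP}"

definition ltl_lang :: "'a set \<Rightarrow> 'a ltl \<Rightarrow> 'a word set" where
  "ltl_lang AP f = {w \<in> words_over AP. ltl_sat w f}"

text \<open>trans q a is the set of disjuncts (each a set of states) of the DNF delta(q,a).\<close>
record ('q, 'a) aca =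
  states :: "'q set"
  init :: 'q
  trans :: "'q \<Rightarrow> 'a set \<Rightarrow> 'q set set"
  rej :: "'q set"

definition aca_wf :: "'a set \<Rightarrow> ('q, 'a) aca \<Rightarrow> bool" where
  "aca_wf AP A \<longleftrightarrow>
     finite AP \<and> finite (states A) \<and> init A \<in> states A \<and> rej A \<subseteq> states A \<and>
     (\<forall>q \<in> states A. \<forall>a. a \<subseteq> AP \<longrightarrow>
        trans A q a \<noteq> {} \<and> finite (trans A q a) \<and>
        (\<forall>c \<in> trans A q a. c \<noteq> {} \<and> c \<subseteq> states A))"

definition run_tree :: "('q, 'a) aca \<Rightarrow> 'a word \<Rightarrow> nat list set \<Rightarrow> (nat list \<Rightarrow> 'q) \<Rightarrow> bool" where
  "run_tree A w T l \<longleftrightarrow>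
     [] \<in> T \<and> (\<forall>x y. x @ y \<in> T \<longrightarrow> x \<in> T) \<and> l [] = init A \<and>
     (\<forall>x \<in> T. {l (x @ [n]) | n. x @ [n] \<in> T} \<in> trans A (l x) (w (length x)))"

definition infinite_branch :: "nat list set \<Rightarrow> (nat \<Rightarrow> nat list) \<Rightarrow> bool" where
  "infinite_branch T b \<longleftrightarrow> b 0 = [] \<and> (\<forall>k. b k \<in> T \<and> (\<exists>n. b (Suc k) = b k @ [n]))"

definition accepting_run :: "('q, 'a) aca \<Rightarrow> nat list set \<Rightarrow> (nat list \<Rightarrow> 'q) \<Rightarrow> bool" where
  "accepting_run A T l \<longleftrightarrow>
     (\<forall>b. infinite_branch T b \<longrightarrow> finite {k. l (b k) \<in> rej A})"

definition aca_accepts :: "('q, 'a) aca \<Rightarrow> 'a word \<Rightarrow> bool" where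
  "aca_accepts A w \<longleftrightarrow> (\<exists>T l. run_tree A w T l \<and> accepting_run A T l)"

definition aca_lang :: "'a set \<Rightarrow> ('q, 'a) aca \<Rightarrow> 'a word set" where
  "aca_lang AP A = {w \<in> words_over AP. aca_accepts A w}"

definition finite_moore :: "'v set \<Rightarrow> ('v set list \<Rightarrow> 'v set) \<Rightarrow> bool" where
  "finite_moore I s \<longleftrightarrow>
     (\<exists>(S :: nat set) m0 tr out. finite S \<and> m0 \<in> S \<and>
        (\<forall>m \<in> S. \<forall>a. a \<subseteq> I \<longrightarrow> tr m a \<in> S) \<and>
        (\<forall>u. set u \<subseteq> Pow I \<longrightarrow> s u = out (foldl tr m0 u)))"

definition is_strategy :: "'v set \<Rightarrow> 'v set \<Rightarrow> ('v set list \<Rightarrow> 'v set) \<Rightarrow> bool" where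
  "is_strategy I Out s \<longleftrightarrow> (\<forall>u. set u \<subseteq> Pow I \<longrightarrow> s u \<subseteq> Out) \<and> finite_moore I s"

definition comp :: "('v set list \<Rightarrow> 'v set) \<Rightarrow> 'v word \<Rightarrow> 'v word" where
  "comp s g = (\<lambda>j. g j \<union> s (map g [0..<j]))"

definition winning :: "'v set \<Rightarrow> ('v set list \<Rightarrow> 'v set) \<Rightarrow> 'v ltl \<Rightarrow> bool" where
  "winning I s f \<longleftrightarrow> (\<forall>g \<in> words_over I. ltl_sat (comp s g) f)"

datatype 'q gpos =
    SpA 'q 'q nat
  | DuA 'q 'q "'q set" nat
  | SpB 'q 'q "'q set" "'q set" nat
  | DuB 'q 'q "'q set" 'q nat

fun alt_state :: "'q gpos \<Rightarrow> 'q" where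
  "alt_state (SpA p q j) = p"
| "alt_state (DuA p q c j) = p"
| "alt_state (SpB p q c c' j) = p"
| "alt_state (DuB p q c q' j) = p"

fun dom_state :: "'q gpos \<Rightarrow> 'q" where
  "dom_state (SpA p q j) = q"
| "dom_state (DuA p q c j) = q"
| "dom_state (SpB p q c c' j) = q"
| "dom_state (DuB p q c q' j) = q"

fun dup_pos :: "'q gpos \<Rightarrow> bool" where
  "dup_pos (SpA p q j) = False"
| "dup_pos (DuA p q c j) = True"
| "dup_pos (SpB p q c c' j) = False"
| "dup_pos (DuB p q c q' j) = True"

fun gmove :: "('q, 'a) aca \<Rightarrow> 'a word \<Rightarrow> 'a word \<Rightarrow> 'q gpos \<Rightarrow> 'q gpos \<Rightarrow> bool" where
  "gmove A w w' (SpA p q j) y = (\<exists>c \<in> trans A p (w j). y = DuA p q c j)"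
| "gmove A w w' (DuA p q c j) y = (\<exists>c' \<in> trans A q (w' j). y = SpB p q c c' j)"
| "gmove A w w' (SpB p q c c' j) y = (\<exists>q' \<in> c'. y = DuB p q c q' j)"
| "gmove A w w' (DuB p q c q' j) y = (\<exists>p' \<in> c. y = SpA p' q' (Suc j))"

definition init_pos :: "('q, 'a) aca \<Rightarrow> 'q gpos" where
  "init_pos A = SpA (init A) (init A) 0"

definition consistent_prefix ::
  "('q, 'a) aca \<Rightarrow> 'a word \<Rightarrow> 'a word \<Rightarrow> ('q gpos list \<Rightarrow> 'q gpos) \<Rightarrow> 'q gpos list \<Rightarrow> bool" where
  "consistent_prefix A w w' f xs \<longleftrightarrow>
     xs \<noteq> [] \<and> xs ! 0 = init_pos A \<and>
     (\<forall>k. Suc k < length xs \<longrightarrow> gmove A w w' (xs ! k) (xs ! Suc k) \<and>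
        (dup_pos (xs ! k) \<longrightarrow> xs ! Suc k = f (take (Suc k) xs)))"

definition dup_strategy ::
  "('q, 'a) aca \<Rightarrow> 'a word \<Rightarrow> 'a word \<Rightarrow> ('q gpos list \<Rightarrow> 'q gpos) \<Rightarrow> bool" where
  "dup_strategy A w w' f \<longleftrightarrow>
     (\<forall>xs. consistent_prefix A w w' f xs \<and> dup_pos (last xs) \<longrightarrow> gmove A w w' (last xs) (f xs))"

definition consistent_play ::
  "('q, 'a) aca \<Rightarrow> 'a word \<Rightarrow> 'a word \<Rightarrow> ('q gpos list \<Rightarrow> 'q gpos) \<Rightarrow> (nat \<Rightarrow> 'q gpos) \<Rightarrow> bool" where
  "consistent_play A w w' f r \<longleftrightarrow>
     r 0 = init_pos A \<and>
     (\<forall>k. gmove A w w' (r k) (r (Suc k)) \<and>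
        (dup_pos (r k) \<longrightarrow> r (Suc k) = f (map r [0..<Suc k])))"

definition dup_won :: "('q, 'a) aca \<Rightarrow> (nat \<Rightarrow> 'q gpos) \<Rightarrow> bool" where
  "dup_won A r \<longleftrightarrow> (\<forall>k. dom_state (r k) \<in> rej A \<longrightarrow> (\<exists>k'\<ge>k. alt_state (r k') \<in> rej A))"

definition dup_wins :: "('q, 'a) aca \<Rightarrow> 'a word \<Rightarrow> 'a word \<Rightarrow> bool" where
  "dup_wins A w w' \<longleftrightarrow>
     (\<exists>f. dup_strategy A w w' f \<and> (\<forall>r. consistent_play A w w' f r \<longrightarrow> dup_won A r))"

definition delay_dominates ::
  "('q, 'v) aca \<Rightarrow> 'v set \<Rightarrow> ('v set list \<Rightarrow> 'v set) \<Rightarrow> ('v set list \<Rightarrow> 'v set) \<Rightarrow> bool" where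
  "delay_dominates A I s t \<longleftrightarrow> (\<forall>g \<in> words_over I. dup_wins A (comp t g) (comp s g))"

definition delay_dominant ::
  "('q, 'v) aca \<Rightarrow> 'v set \<Rightarrow> 'v set \<Rightarrow> ('v set list \<Rightarrow> 'v set) \<Rightarrow> bool" where
  "delay_dominant A I Out s \<longleftrightarrow> (\<forall>t. is_strategy I Out t \<longrightarrow> delay_dominates A I s t)"

end

theory Submission
  imports Defs "HOL-Library.Countable_Set"
begin

text \<open>If Duplicator wins the delay-dominance game on words w and w', then an accepting run tree
  of the automaton on w can be transformed into one on w': Duplicator's strategy is played against
  a Spoiler who reads his choices for the alternative side off the given run tree, and the
  dominant states visited along the resulting plays label a run tree on w'. A rejecting dominant
  state is eventually matched by a rejecting alternative state, and along every branch the latter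
  occur only finitely often, so the new run tree is accepting as well. Winning for the formula is
  then transferred from a winning strategy t to a delay-dominant strategy s through the language
  of the automaton.\<close>

lemma comp_in_words_over:
  assumes "is_strategy I Out s" and "g \<in> words_over I"
  shows "comp s g \<in> words_over (I \<union> Out)"
proof -
  have "set (map g [0..<j]) \<subseteq> Pow I" for j
    using assms(2) by (auto simp: words_over_def)
  then have "s (map g [0..<j]) \<subseteq> Out" for j
    using assms(1) by (auto simp: is_strategy_def)
  then show ?thesis
    using assms(2) by (auto simp: words_over_def comp_def)
qed

lemma consistent_prefix_snoc:
  assumes "consistent_prefix A w w' f xs" and "gmove A w w' (last xs) z"
    and "dup_pos (last xs) \<Longrightarrow> z = f xs"
  shows "consistent_prefix A w w' f (xs @ [z])"
proof -
  have ne: "xs \<noteq> []"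
    using assms(1) by (simp add: consistent_prefix_def)
  have "gmove A w w' ((xs @ [z]) ! k) ((xs @ [z]) ! Suc k) \<and>
      (dup_pos ((xs @ [z]) ! k) \<longrightarrow> (xs @ [z]) ! Suc k = f (take (Suc k) (xs @ [z])))"
    if k: "Suc k < length (xs @ [z])" for k
  proof (cases "Suc k < length xs")
    case True
    then show ?thesis
      using assms(1) by (simp add: consistent_prefix_def nth_append)
  next
    case False
    then have e: "Suc k = length xs"
      using k by simp
    then have "xs ! k = last xs"
      using ne by (metis diff_Suc_1 last_conv_nth)
    then show ?thesis
      using e assms(2,3) by (simp add: nth_append)
  qed
  moreover have "(xs @ [z]) ! 0 = init_pos A"
    using ne assms(1) by (simp add: consistent_prefix_def nth_append)
  ultimately show ?thesis
    unfolding consistent_prefix_def by simp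
qed

fun dom_disjunct :: "'q gpos \<Rightarrow> 'q set" where
  "dom_disjunct (SpB p q c c' j) = c'"
| "dom_disjunct _ = {}"

locale dominance_simulation =
  fixes AP :: "'a set" and A :: "('q, 'a) aca" and w w' :: "'a word"
    and f :: "'q gpos list \<Rightarrow> 'q gpos" and T :: "nat list set" and l :: "nat list \<Rightarrow> 'q"
  assumes wf: "aca_wf AP A" and w'_words: "w' \<in> words_over AP"
    and strategy: "dup_strategy A w w' f" and run: "run_tree A w T l"
begin

definition children :: "nat list \<Rightarrow> 'q set" where
  "children y = {l (y @ [m]) | m. y @ [m] \<in> T}"

definition spoiler_move :: "'q gpos list \<Rightarrow> nat list \<Rightarrow> 'q gpos" where
  "spoiler_move h y = DuA (l y) (dom_state (last h)) (children y) (length y)"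

definition answer :: "'q gpos list \<Rightarrow> nat list \<Rightarrow> 'q set" where
  "answer h y = dom_disjunct (f (h @ [spoiler_move h y]))"

text \<open>One round of the game, started in a position whose alternative state labels the node y
  of the given run tree: Spoiler plays the disjunct formed by the children of y, and the n-th
  state of Duplicator's answer; Duplicator's reply p' is then tracked by a child of y labelled p'.
  Indexing Spoiler's choices by natural numbers lets the simulated run tree be the full tree.\<close>

fun round :: "'q gpos list \<times> nat list \<Rightarrow> nat \<Rightarrow> 'q gpos list \<times> nat list" where
  "round (h, y) n =
     (let h1 = h @ [spoiler_move h y];
          h3 = h1 @ [f h1, DuB (l y) (dom_state (last h)) (children y)
                             (from_nat_into (answer h y) n) (length y)];
          p' = alt_state (f h3)
      in (h3 @ [f h3], y @ [SOME m. y @ [m] \<in> T \<and> l (y @ [m]) = p']))"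

definition coupled :: "'q gpos list \<times> nat list \<Rightarrow> bool" where
  "coupled = (\<lambda>(h, y). consistent_prefix A w w' f h \<and> y \<in> T \<and> length h = Suc (4 * length y) \<and>
     (\<exists>q \<in> states A. last h = SpA (l y) q (length y)))"

lemma answer_in_trans:
  assumes "coupled (h, y)" and last: "last h = SpA (l y) q (length y)"
  shows "answer h y \<in> trans A q (w' (length y))"
    and "f (h @ [spoiler_move h y]) = SpB (l y) q (children y) (answer h y) (length y)"
    and "consistent_prefix A w w' f (h @ [spoiler_move h y])"
proof -
  have cp: "consistent_prefix A w w' f h" and y: "y \<in> T"
    using assms(1) by (auto simp: coupled_def)
  have "children y \<in> trans A (l y) (w (length y))"
    using run y by (auto simp: run_tree_def children_def)
  then show cp1: "consistent_prefix A w w' f (h @ [spoiler_move h y])"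
    using last by (intro consistent_prefix_snoc[OF cp]) (auto simp: spoiler_move_def)
  have "gmove A w w' (spoiler_move h y) (f (h @ [spoiler_move h y]))"
    using strategy cp1 by (auto simp: dup_strategy_def spoiler_move_def)
  then obtain c' where "c' \<in> trans A q (w' (length y))"
    and "f (h @ [spoiler_move h y]) = SpB (l y) q (children y) c' (length y)"
    using last by (auto simp: spoiler_move_def)
  then show "answer h y \<in> trans A q (w' (length y))"
    and "f (h @ [spoiler_move h y]) = SpB (l y) q (children y) (answer h y) (length y)"
    by (simp_all add: answer_def)
qed

lemma answer_nonempty_subset:
  assumes "coupled (h, y)" and "last h = SpA (l y) q (length y)"
  shows "answer h y \<noteq> {}" and "answer h y \<subseteq> states A"
proof -
  have "q \<in> states A"
    using assms by (auto simp: coupled_def)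
  moreover have "w' (length y) \<subseteq> AP"
    using w'_words by (auto simp: words_over_def)
  ultimately show "answer h y \<noteq> {}" and "answer h y \<subseteq> states A"
    using wf answer_in_trans(1)[OF assms] unfolding aca_wf_def by blast+
qed

lemma round_unfold:
  assumes coupled: "coupled (h, y)" and last: "last h = SpA (l y) q (length y)"
  obtains p' m where "y @ [m] \<in> T" and "l (y @ [m]) = p'"
    and "round (h, y) n =
      (h @ [DuA (l y) q (children y) (length y), SpB (l y) q (children y) (answer h y) (length y),
            DuB (l y) q (children y) (from_nat_into (answer h y) n) (length y),
            SpA p' (from_nat_into (answer h y) n) (Suc (length y))], y @ [m])"
    and "consistent_prefix A w w' f (fst (round (h, y) n))"
proof -
  define q' where "q' = from_nat_into (answer h y) n"
  define h1 where "h1 = h @ [spoiler_move h y]"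
  define h3 where "h3 = h1 @ [f h1, DuB (l y) q (children y) q' (length y)]"
  have fh1: "f h1 = SpB (l y) q (children y) (answer h y) (length y)"
    and cp1: "consistent_prefix A w w' f h1"
    using answer_in_trans[OF coupled last] by (simp_all add: h1_def)
  have "q' \<in> answer h y"
    using answer_nonempty_subset[OF coupled last] by (simp add: q'_def from_nat_into)
  have cp2: "consistent_prefix A w w' f (h1 @ [f h1])"
    using strategy cp1
    by (intro consistent_prefix_snoc) (auto simp: dup_strategy_def h1_def spoiler_move_def)
  have cp3: "consistent_prefix A w w' f h3"
    unfolding h3_def using consistent_prefix_snoc[OF cp2] fh1 \<open>q' \<in> answer h y\<close> by simp
  have "gmove A w w' (last h3) (f h3)"
    using strategy cp3 by (auto simp: dup_strategy_def h3_def)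
  then obtain p' where p': "p' \<in> children y" and fh3: "f h3 = SpA p' q' (Suc (length y))"
    by (auto simp: h3_def)
  define m where "m = (SOME m. y @ [m] \<in> T \<and> l (y @ [m]) = p')"
  have m: "y @ [m] \<in> T \<and> l (y @ [m]) = p'"
    unfolding m_def by (rule someI_ex) (use p' in \<open>auto simp: children_def\<close>)
  have dom_last: "dom_state (last h) = q"
    using last by simp
  have round_eq: "round (h, y) n = (h3 @ [f h3], y @ [m])"
    unfolding round.simps Let_def dom_last h1_def[symmetric] q'_def[symmetric] h3_def[symmetric]
    by (simp add: fh3 m_def)
  have cp4: "consistent_prefix A w w' f (h3 @ [f h3])"
    using strategy cp3 by (intro consistent_prefix_snoc) (auto simp: dup_strategy_def h3_def)
  have h4: "h3 @ [f h3] =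
      h @ [DuA (l y) q (children y) (length y), SpB (l y) q (children y) (answer h y) (length y),
           DuB (l y) q (children y) q' (length y), SpA p' q' (Suc (length y))]"
    unfolding fh3 by (simp only: h3_def fh1) (simp add: h1_def spoiler_move_def dom_last)
  show thesis
  proof (rule that[of m p'])
    show "round (h, y) n =
      (h @ [DuA (l y) q (children y) (length y), SpB (l y) q (children y) (answer h y) (length y),
            DuB (l y) q (children y) (from_nat_into (answer h y) n) (length y),
            SpA p' (from_nat_into (answer h y) n) (Suc (length y))], y @ [m])"
      unfolding round_eq h4 q'_def ..
    show "consistent_prefix A w w' f (fst (round (h, y) n))"
      unfolding round_eq using cp4 by simp
  qed (use m in auto)
qed

lemma coupled_round:
  assumes "coupled (h, y)"
  shows "coupled (round (h, y) n)" and "length (snd (round (h, y) n)) = Suc (length y)"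
proof -
  obtain q where last: "last h = SpA (l y) q (length y)"
    using assms by (auto simp: coupled_def)
  obtain p' m where m: "y @ [m] \<in> T" and p': "l (y @ [m]) = p'"
    and round: "round (h, y) n =
      (h @ [DuA (l y) q (children y) (length y), SpB (l y) q (children y) (answer h y) (length y),
            DuB (l y) q (children y) (from_nat_into (answer h y) n) (length y),
            SpA p' (from_nat_into (answer h y) n) (Suc (length y))], y @ [m])"
    and cp: "consistent_prefix A w w' f (fst (round (h, y) n))"
    by (rule round_unfold[OF assms last])
  have "from_nat_into (answer h y) n \<in> answer h y"
    by (rule from_nat_into[OF answer_nonempty_subset(1)[OF assms last]])
  then have "from_nat_into (answer h y) n \<in> states A"
    using answer_nonempty_subset(2)[OF assms last] by blast
  with assms m p' cp show "coupled (round (h, y) n)"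
    unfolding round by (auto simp: coupled_def)
  show "length (snd (round (h, y) n)) = Suc (length y)"
    unfolding round by simp
qed

definition hist :: "nat list \<Rightarrow> 'q gpos list \<times> nat list" where
  "hist x = foldl round ([init_pos A], []) x"

lemma hist_Nil: "hist [] = ([init_pos A], [])"
  by (simp add: hist_def)

lemma hist_snoc: "hist (x @ [n]) = round (hist x) n"
  by (simp add: hist_def)

lemma coupled_hist: "coupled (hist x)" and length_snd_hist: "length (snd (hist x)) = length x"
proof (induction x rule: rev_induct)
  case Nil
  have "l [] = init A" and "[] \<in> T"
    using run by (auto simp: run_tree_def)
  moreover have "init A \<in> states A"
    using wf by (auto simp: aca_wf_def)
  ultimately show "coupled (hist [])" and "length (snd (hist [])) = length []"
    by (auto simp: hist_Nil coupled_def consistent_prefix_def init_pos_def)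
next
  case (snoc n x)
  then show "coupled (hist (x @ [n]))" and "length (snd (hist (x @ [n]))) = length (x @ [n])"
    using coupled_round[of "fst (hist x)" "snd (hist x)" n] by (simp_all add: hist_snoc)
qed

definition dom_label :: "nat list \<Rightarrow> 'q" where
  "dom_label x = dom_state (last (fst (hist x)))"

lemma last_fst_hist:
  "last (fst (hist x)) = SpA (l (snd (hist x))) (dom_label x) (length x)"
  using coupled_hist[of x] length_snd_hist[of x]
  by (auto simp: coupled_def dom_label_def split: prod.splits)

lemma dom_label_snoc:
  "dom_label (x @ [n]) = from_nat_into (answer (fst (hist x)) (snd (hist x))) n"
proof -
  obtain h y where hist: "hist x = (h, y)"
    by fastforce
  have coupled: "coupled (h, y)" and last: "last h = SpA (l y) (dom_label x) (length y)"
    using coupled_hist[of x] last_fst_hist[of x] length_snd_hist[of x] by (simp_all add: hist)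
  show ?thesis
    by (cases rule: round_unfold[OF coupled last, of n]) (simp add: dom_label_def hist_snoc hist)
qed

lemma run_tree_dom_label: "run_tree A w' UNIV dom_label"
  unfolding run_tree_def
proof (intro conjI ballI allI impI)
  show "dom_label [] = init A"
    by (simp add: dom_label_def hist_Nil init_pos_def)
next
  fix x :: "nat list"
  obtain h y where hist: "hist x = (h, y)"
    by fastforce
  have coupled: "coupled (h, y)" and last: "last h = SpA (l y) (dom_label x) (length y)"
    and len: "length y = length x"
    using coupled_hist[of x] last_fst_hist[of x] length_snd_hist[of x] by (simp_all add: hist)
  have "countable (answer h y)"
    using answer_nonempty_subset(2)[OF coupled last] wf
    by (meson aca_wf_def countable_finite finite_subset)
  then have "{dom_label (x @ [n]) | n. x @ [n] \<in> UNIV} = answer h y"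
    using range_from_nat_into[OF answer_nonempty_subset(1)[OF coupled last]]
    by (auto simp: dom_label_snoc hist)
  then show "{dom_label (x @ [n]) | n. x @ [n] \<in> UNIV} \<in> trans A (dom_label x) (w' (length x))"
    using answer_in_trans(1)[OF coupled last] len by simp
qed auto

end

locale dominance_branch = dominance_simulation +
  fixes b :: "nat \<Rightarrow> nat list"
  assumes branch: "infinite_branch UNIV b"
begin

definition branch_hist where
  "branch_hist k = fst (hist (b k))"

definition branch_node where
  "branch_node k = snd (hist (b k))"

text \<open>The histories along the branch extend each other, so their diagonal is a single play.\<close>

definition play where
  "play i = branch_hist i ! i"

lemma length_branch: "length (b k) = k"
proof (induction k)
  case 0
  then show ?case
    using branch by (simp add: infinite_branch_def)
next
  case (Suc k)
  obtain n where "b (Suc k) = b k @ [n]"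
    using branch by (auto simp: infinite_branch_def)
  with Suc show ?case
    by simp
qed

lemma length_branch_hist: "length (branch_hist k) = Suc (4 * k)"
  using coupled_hist[of "b k"] length_snd_hist[of "b k"] length_branch[of k]
  by (auto simp: coupled_def branch_hist_def split: prod.splits)

lemma last_branch_hist: "last (branch_hist k) = SpA (l (branch_node k)) (dom_label (b k)) k"
  using last_fst_hist[of "b k"] length_branch[of k] by (simp add: branch_hist_def branch_node_def)

lemma branch_step:
  obtains c' q' m where
    "branch_hist (Suc k) = branch_hist k @
       [DuA (l (branch_node k)) (dom_label (b k)) (children (branch_node k)) k,
        SpB (l (branch_node k)) (dom_label (b k)) (children (branch_node k)) c' k,
        DuB (l (branch_node k)) (dom_label (b k)) (children (branch_node k)) q' k,
        SpA (l (branch_node (Suc k))) q' (Suc k)]"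
    and "branch_node (Suc k) = branch_node k @ [m]"
proof -
  obtain n where bn: "b (Suc k) = b k @ [n]"
    using branch by (auto simp: infinite_branch_def)
  obtain h y where hist: "hist (b k) = (h, y)"
    by fastforce
  have coupled: "coupled (h, y)" and len: "length y = k"
    and last: "last h = SpA (l y) (dom_label (b k)) (length y)"
    using coupled_hist[of "b k"] length_snd_hist[of "b k"] last_fst_hist[of "b k"] length_branch[of k]
    by (simp_all add: hist)
  show thesis
    by (cases rule: round_unfold[OF coupled last, of n])
      (auto intro!: that simp: branch_hist_def branch_node_def bn hist_snoc hist len)
qed

lemma branch_hist_prefix:
  assumes "k \<le> k'"
  shows "\<exists>zs. branch_hist k' = branch_hist k @ zs"
  using assms
proof (induction k' rule: dec_induct)
  case (step k')
  then show ?case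
    by (cases rule: branch_step[of k']) auto
qed simp

lemma branch_hist_nth_play:
  assumes "i < length (branch_hist k)"
  shows "branch_hist k ! i = play i"
proof (cases "k \<le> i")
  case True
  then obtain zs where "branch_hist i = branch_hist k @ zs"
    using branch_hist_prefix by blast
  then show ?thesis
    using assms by (simp add: play_def nth_append)
next
  case False
  then obtain zs where "branch_hist k = branch_hist i @ zs"
    using branch_hist_prefix by fastforce
  moreover have "i < length (branch_hist i)"
    using length_branch_hist by simp
  ultimately show ?thesis
    by (simp add: play_def nth_append)
qed

lemma play_4k: "play (4 * k) = SpA (l (branch_node k)) (dom_label (b k)) k"
proof -
  have "play (4 * k) = branch_hist k ! (4 * k)"
    using branch_hist_nth_play[of "4 * k" k] length_branch_hist by simp
  also have "\<dots> = last (branch_hist k)"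
    using length_branch_hist[of k] by (subst last_conv_nth) auto
  finally show ?thesis
    by (simp add: last_branch_hist)
qed

lemma alt_state_play: "alt_state (play i) = l (branch_node (i div 4))"
proof -
  define k where "k = i div 4"
  show ?thesis
  proof (cases "i = 4 * k")
    case True
    then show ?thesis
      using play_4k[of k] by (simp add: k_def[symmetric])
  next
    case False
    then have r: "i - Suc (4 * k) < 3" and i: "Suc (4 * k) \<le> i"
      unfolding k_def by presburger+
    have "play i = branch_hist (Suc k) ! i"
      using branch_hist_nth_play[of i "Suc k"] length_branch_hist[of "Suc k"] r i by simp
    then show ?thesis
      using r i length_branch_hist[of k]
      by (cases rule: branch_step[of k])
        (auto simp: nth_append k_def[symmetric] less_Suc_eq numeral_3_eq_3)
  qed
qed

lemma consistent_play_play: "consistent_play A w w' f play"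
  unfolding consistent_play_def
proof (intro conjI allI impI)
  show "play 0 = init_pos A"
    using play_4k[of 0] branch run
    by (simp add: infinite_branch_def branch_node_def hist_Nil init_pos_def dom_label_def run_tree_def)
next
  fix k
  have kl: "Suc k < length (branch_hist (Suc k))"
    using length_branch_hist by simp
  have "consistent_prefix A w w' f (branch_hist (Suc k))"
    using coupled_hist[of "b (Suc k)"] by (auto simp: coupled_def branch_hist_def split: prod.splits)
  then have "gmove A w w' (branch_hist (Suc k) ! k) (branch_hist (Suc k) ! Suc k) \<and>
      (dup_pos (branch_hist (Suc k) ! k) \<longrightarrow>
        branch_hist (Suc k) ! Suc k = f (take (Suc k) (branch_hist (Suc k))))"
    using kl unfolding consistent_prefix_def by blast
  then have move: "gmove A w w' (play k) (play (Suc k)) \<and>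
      (dup_pos (play k) \<longrightarrow> play (Suc k) = f (take (Suc k) (branch_hist (Suc k))))"
    using kl branch_hist_nth_play[of k "Suc k"] branch_hist_nth_play[of "Suc k" "Suc k"] by simp
  have "take (Suc k) (branch_hist (Suc k)) = map play [0..<Suc k]"
    by (rule nth_equalityI) (use kl branch_hist_nth_play in \<open>simp_all del: upt_Suc\<close>)
  with move show "gmove A w w' (play k) (play (Suc k))"
    and "dup_pos (play k) \<Longrightarrow> play (Suc k) = f (map play [0..<Suc k])"
    by simp_all
qed

lemma infinite_branch_branch_node: "infinite_branch T branch_node"
  unfolding infinite_branch_def
proof (intro conjI allI)
  show "branch_node 0 = []"
    using branch by (simp add: infinite_branch_def branch_node_def hist_Nil)
next
  fix k
  show "branch_node k \<in> T"
    using coupled_hist[of "b k"] by (auto simp: coupled_def branch_node_def split: prod.splits)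
  show "\<exists>n. branch_node (Suc k) = branch_node k @ [n]"
    by (cases rule: branch_step[of k]) auto
qed

lemma finite_rejecting_dom_label:
  assumes "accepting_run A T l" and "dup_won A play"
  shows "finite {k. dom_label (b k) \<in> rej A}"
proof -
  have "finite {k. l (branch_node k) \<in> rej A}"
    using assms(1) infinite_branch_branch_node by (simp add: accepting_run_def)
  then obtain N where N: "\<And>k. l (branch_node k) \<in> rej A \<Longrightarrow> k < N"
    by (auto simp: finite_nat_set_iff_bounded)
  have "{k. dom_label (b k) \<in> rej A} \<subseteq> {..<N}"
  proof
    fix k
    assume "k \<in> {k. dom_label (b k) \<in> rej A}"
    then have "dom_state (play (4 * k)) \<in> rej A"
      by (simp add: play_4k)
    then obtain k' where "4 * k \<le> k'" and "alt_state (play k') \<in> rej A"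
      using assms(2) by (auto simp: dup_won_def)
    then show "k \<in> {..<N}"
      using N[of "k' div 4"] alt_state_play[of k'] by simp
  qed
  then show ?thesis
    using finite_subset by blast
qed

end

lemma (in dominance_simulation) accepting_run_dom_label:
  assumes "accepting_run A T l" and "\<And>r. consistent_play A w w' f r \<Longrightarrow> dup_won A r"
  shows "accepting_run A UNIV dom_label"
  unfolding accepting_run_def
proof (intro allI impI)
  fix b
  assume "infinite_branch UNIV b"
  then interpret dominance_branch AP A w w' f T l b
    by unfold_locales
  show "finite {k. dom_label (b k) \<in> rej A}"
    using finite_rejecting_dom_label assms consistent_play_play by blast
qed

theorem dup_wins_aca_accepts:
  assumes "aca_wf AP A" and "w' \<in> words_over AP"
    and "aca_accepts A w" and "dup_wins A w w'"
  shows "aca_accepts A w'"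
proof -
  obtain T l where run: "run_tree A w T l" and acc: "accepting_run A T l"
    using assms(3) by (auto simp: aca_accepts_def)
  obtain f where strategy: "dup_strategy A w w' f"
    and win: "\<And>r. consistent_play A w w' f r \<Longrightarrow> dup_won A r"
    using assms(4) by (auto simp: dup_wins_def)
  interpret dominance_simulation AP A w w' f T l
    using assms(1,2) strategy run by unfold_locales
  show ?thesis
    using run_tree_dom_label accepting_run_dom_label[OF acc win] by (auto simp: aca_accepts_def)
qed

theorem lemma6:
  fixes I Out :: "'v set" and phi :: "'v ltl" and A :: "('q, 'v) aca"
    and s :: "'v set list \<Rightarrow> 'v set"
  assumes "finite I" and "finite Out" and "I \<inter> Out = {}"
    and "ltl_atoms phi \<subseteq> I \<union> Out"
    and "aca_wf (I \<union> Out) A"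
    and "aca_lang (I \<union> Out) A = ltl_lang (I \<union> Out) phi"
    and "\<exists>t. is_strategy I Out t \<and> winning I t phi"
    and "is_strategy I Out s"
    and "delay_dominant A I Out s"
  shows "winning I s phi"
  unfolding winning_def
proof
  fix g
  assume g: "g \<in> words_over I"
  obtain t where t: "is_strategy I Out t" and t_wins: "winning I t phi"
    using assms(7) by blast
  have "comp t g \<in> aca_lang (I \<union> Out) A"
    using assms(6) comp_in_words_over[OF t g] t_wins g by (simp add: ltl_lang_def winning_def)
  moreover have "dup_wins A (comp t g) (comp s g)"
    using assms(9) t g by (simp add: delay_dominant_def delay_dominates_def)
  ultimately have "comp s g \<in> aca_lang (I \<union> Out) A"
    using dup_wins_aca_accepts[OF assms(5)] comp_in_words_over[OF assms(8) g]
    by (auto simp: aca_lang_def)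
  then show "ltl_sat (comp s g) phi"
    using assms(6) by (simp add: ltl_lang_def)
qed

end
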